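(* Let $(S,\gamma)$ be a $C^\infty$ surface with boundary in $\mathbf{R}^3$, and suppose the boundary $\gamma$ is of finite type $(1,1+s,1+s+r)$ at $t=t_0$ (for positive integers $r,s$). Then $\gamma(t_0)$ is an osculating-tangent point if and only if $\kappa_2^{(s-1)}(t_0)=0$.
   Context: $S\subset\mathbf{R}^3$ is a co-oriented immersed $C^\infty$ surface with boundary curve $\gamma$, parametrised by arc length $t$; $f^{(j)}$ denotes the $j$-th derivative in $t$. Adapted frame: $\boldsymbol e_1=\gamma'$, $\boldsymbol e_3=\boldsymbol n$ the unit normal of $S$, $\boldsymbol e_2=\boldsymbol e_3\times\boldsymbol e_1$; $\kappa_1,\kappa_2,\kappa_3$ are defined by $\boldsymbol e_1'=\kappa_1\boldsymbol e_2+\kappa_2\boldsymbol e_3$, $\boldsymbol e_2'=-\kappa_1\boldsymbol e_1+\kappa_3\boldsymbol e_3$, $\boldsymbol e_3'=-\kappa_2\boldsymbol e_1-\kappa_3\boldsymbol e_2$. The curve $\gamma$ is of finite type at $t_0$ if $A_m(t_0)=(\gamma'(t_0),\dots,\gamma^{(m)}(t_0))$ has rank $3$ for some $m$; its type is $(a_1,a_2,a_3)$ with $a_i=\min\{m:\mathrm{rank}A_m(t_0)=i\}$. The osculating plane at $t_0$ is the plane through $\gamma(t_0)$ spanned by $\gamma^{(a_1)}(t_0)$ and $\gamma^{(a_2)}(t_0)$. $\gamma(t_0)$ is an osculating-tangent point if this osculating plane equals $T_{\gamma(t_0)}S$. *)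

theory Defs
  imports "HOL-Analysis.Analysis" "HOL-Analysis.Cross3"
begin

fun vderiv :: "nat \<Rightarrow> (real \<Rightarrow> 'a::real_normed_vector) \<Rightarrow> real \<Rightarrow> 'a" where
  "vderiv 0 f = f"
| "vderiv (Suc k) f = (\<lambda>t. vector_derivative (vderiv k f) (at t))"

definition smooth_on :: "real set \<Rightarrow> (real \<Rightarrow> 'a::real_normed_vector) \<Rightarrow> bool" where
  "smooth_on I f \<longleftrightarrow> (\<forall>k. \<forall>t\<in>I. vderiv k f differentiable (at t))"

definition rankA :: "(real \<Rightarrow> real^3) \<Rightarrow> nat \<Rightarrow> real \<Rightarrow> nat" where
  "rankA \<gamma> m t0 = dim {vderiv k \<gamma> t0 | k. 1 \<le> k \<and> k \<le> m}"

definition finite_type_at :: "(real \<Rightarrow> real^3) \<Rightarrow> real \<Rightarrow> bool" where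
  "finite_type_at \<gamma> t0 \<longleftrightarrow> (\<exists>m. rankA \<gamma> m t0 = 3)"

definition curve_type :: "(real \<Rightarrow> real^3) \<Rightarrow> real \<Rightarrow> nat \<times> nat \<times> nat" where
  "curve_type \<gamma> t0 =
     ((LEAST m. rankA \<gamma> m t0 = 1), (LEAST m. rankA \<gamma> m t0 = 2), (LEAST m. rankA \<gamma> m t0 = 3))"

definition osculating_plane :: "(real \<Rightarrow> real^3) \<Rightarrow> real \<Rightarrow> (real^3) set" where
  "osculating_plane \<gamma> t0 =
     (let (a1, a2, a3) = curve_type \<gamma> t0 in
      {\<gamma> t0 + a *\<^sub>R vderiv a1 \<gamma> t0 + b *\<^sub>R vderiv a2 \<gamma> t0 | a b. True})"

definition frame_e1 :: "(real \<Rightarrow> real^3) \<Rightarrow> real \<Rightarrow> real^3" where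
  "frame_e1 \<gamma> = vderiv 1 \<gamma>"

definition frame_e3 :: "(real \<Rightarrow> real^3) \<Rightarrow> real \<Rightarrow> real^3" where
  "frame_e3 n = n"

definition frame_e2 :: "(real \<Rightarrow> real^3) \<Rightarrow> (real \<Rightarrow> real^3) \<Rightarrow> real \<Rightarrow> real^3" where
  "frame_e2 \<gamma> n t = cross3 (frame_e3 n t) (frame_e1 \<gamma> t)"

text \<open>kappa_2 is the e3-coefficient of e1' = kappa1 e2 + kappa2 e3 (orthonormal frame).\<close>
definition kappa2 :: "(real \<Rightarrow> real^3) \<Rightarrow> (real \<Rightarrow> real^3) \<Rightarrow> real \<Rightarrow> real" where
  "kappa2 \<gamma> n t = vector_derivative (frame_e1 \<gamma>) (at t) \<bullet> frame_e3 n t"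

definition tangent_plane_at :: "(real \<Rightarrow> real^3) \<Rightarrow> (real \<Rightarrow> real^3) \<Rightarrow> real \<Rightarrow> (real^3) set" where
  "tangent_plane_at \<gamma> n t0 = {\<gamma> t0 + w | w. w \<bullet> n t0 = 0}"

definition osculating_tangent_point :: "(real \<Rightarrow> real^3) \<Rightarrow> (real \<Rightarrow> real^3) \<Rightarrow> real \<Rightarrow> bool" where
  "osculating_tangent_point \<gamma> n t0 \<longleftrightarrow> osculating_plane \<gamma> t0 = tangent_plane_at \<gamma> n t0"

end

theory Submission imports Defs begin

text \<open>Up to order s the derivatives of \<gamma> at t0 are parallel to \<gamma>'; differentiating
  \<gamma>'\<bullet>\<gamma>' = 1 shows inductively that \<gamma>'', ..., \<gamma>^(s) vanish there. By the Leibniz rule,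
  \<kappa>2^(s-1)(t0) = (\<gamma>'' \<bullet> n)^(s-1)(t0) then reduces to \<gamma>^(s+1)(t0) \<bullet> n(t0). The osculating
  plane is spanned by \<gamma>' and \<gamma>^(s+1), and \<gamma>' is always tangent to S, so the two planes
  coincide exactly when \<gamma>^(s+1)(t0) is orthogonal to the normal.\<close>

lemma has_vector_derivative_inner:
  fixes f g :: "real \<Rightarrow> 'a::real_inner"
  assumes "(f has_vector_derivative a) (at t)" "(g has_vector_derivative b) (at t)"
  shows "((\<lambda>t. f t \<bullet> g t) has_vector_derivative (a \<bullet> g t + f t \<bullet> b)) (at t)"
proof -
  have "((\<lambda>t. f t \<bullet> g t) has_derivative (\<lambda>h. f t \<bullet> (h *\<^sub>R b) + (h *\<^sub>R a) \<bullet> g t)) (at t)"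
    using assms unfolding has_vector_derivative_def by (intro has_derivative_inner) auto
  then show ?thesis unfolding has_vector_derivative_def
    by (rule has_derivative_eq_rhs) (auto simp: algebra_simps fun_eq_iff)
qed

lemma vderiv_vderiv: "vderiv k (vderiv m f) = vderiv (k + m) f"
  by (induction k) auto

lemma smooth_on_vderiv: "smooth_on I f \<Longrightarrow> smooth_on I (vderiv m f)"
  unfolding smooth_on_def vderiv_vderiv by auto

lemma smooth_on_has_vector_derivative:
  assumes "smooth_on I f" "t \<in> I"
  shows "(vderiv k f has_vector_derivative vderiv (Suc k) f t) (at t)"
  using assms unfolding smooth_on_def by (auto simp: vector_derivative_works)

lemma vderiv_Suc_eq_0_if_constant_on:
  fixes f :: "real \<Rightarrow> 'a::real_normed_vector"
  assumes "open I" "\<forall>t\<in>I. f t = c" "t \<in> I"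
  shows "vderiv (Suc j) f t = 0"
  using assms(3)
proof (induction j arbitrary: t)
  case 0
  have "(f has_vector_derivative 0) (at t)"
    by (rule has_vector_derivative_transform_within_open[OF _ assms(1) 0, of "\<lambda>_. c"])
      (use assms(2) in auto)
  then show ?case by (simp add: vector_derivative_at)
next
  case (Suc j)
  have "(vderiv (Suc j) f has_vector_derivative 0) (at t)"
    by (rule has_vector_derivative_transform_within_open[OF _ assms(1) Suc.prems, of "\<lambda>_. 0"])
      (use Suc.IH in auto)
  then show ?case by (simp add: vector_derivative_at)
qed

lemma sum_choose_Pascal_step:
  fixes a :: "nat \<Rightarrow> nat \<Rightarrow> real"
  shows "(\<Sum>i\<le>m. real (m choose i) * (a (Suc i) (m - i) + a i (Suc (m - i))))
       = (\<Sum>i\<le>Suc m. real (Suc m choose i) * a i (Suc m - i))"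
proof -
  have Suc_m: "(\<Sum>i\<le>Suc m. real (Suc m choose i) * a i (Suc m - i))
     = a 0 (Suc m) + (\<Sum>i\<le>m. (real (m choose i) + real (m choose Suc i)) * a (Suc i) (m - i))"
    by (subst sum.atMost_Suc_shift) simp
  have shifted: "(\<Sum>i\<le>Suc m. real (m choose i) * a i (Suc m - i))
     = a 0 (Suc m) + (\<Sum>i\<le>m. real (m choose Suc i) * a (Suc i) (m - i))"
    by (subst sum.atMost_Suc_shift) simp
  have unshifted: "(\<Sum>i\<le>Suc m. real (m choose i) * a i (Suc m - i))
     = (\<Sum>i\<le>m. real (m choose i) * a i (Suc (m - i)))"
    by (simp add: Suc_diff_le)
  show ?thesis using Suc_m shifted unshifted
    by (simp add: distrib_left distrib_right sum.distrib)
qed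

lemma vderiv_inner_Leibniz:
  fixes f g :: "real \<Rightarrow> 'a::real_inner"
  assumes "open I" "smooth_on I f" "smooth_on I g" "t \<in> I"
  shows "vderiv m (\<lambda>t. f t \<bullet> g t) t
     = (\<Sum>i\<le>m. real (m choose i) * (vderiv i f t \<bullet> vderiv (m - i) g t))"
  using assms(4)
proof (induction m arbitrary: t)
  case 0
  then show ?case by simp
next
  case (Suc m)
  let ?D = "\<Sum>i\<le>m. real (m choose i) *
     (vderiv (Suc i) f t \<bullet> vderiv (m - i) g t + vderiv i f t \<bullet> vderiv (Suc (m - i)) g t)"
  have "((\<lambda>t. \<Sum>i\<le>m. real (m choose i) * (vderiv i f t \<bullet> vderiv (m - i) g t))
      has_vector_derivative ?D) (at t)"
    by (intro has_vector_derivative_sum has_vector_derivative_mult_right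
        has_vector_derivative_inner smooth_on_has_vector_derivative[OF assms(2) Suc.prems]
        smooth_on_has_vector_derivative[OF assms(3) Suc.prems])
  then have "(vderiv m (\<lambda>t. f t \<bullet> g t) has_vector_derivative ?D) (at t)"
    by (rule has_vector_derivative_transform_within_open[OF _ assms(1) Suc.prems])
      (simp add: Suc.IH)
  then have "vderiv (Suc m) (\<lambda>t. f t \<bullet> g t) t = ?D"
    by (simp add: vector_derivative_at)
  also have "\<dots> = (\<Sum>i\<le>Suc m. real (Suc m choose i) * (vderiv i f t \<bullet> vderiv (Suc m - i) g t))"
    by (rule sum_choose_Pascal_step)
  finally show ?case .
qed

lemma rankA_mono: "m \<le> m' \<Longrightarrow> rankA \<gamma> m t0 \<le> rankA \<gamma> m' t0"
  unfolding rankA_def by (rule dim_subset) auto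

lemma rankA_Suc_le: "rankA \<gamma> (Suc m) t0 \<le> rankA \<gamma> m t0 + 1"
proof -
  have derivs_Suc: "{vderiv k \<gamma> t0 | k. 1 \<le> k \<and> k \<le> Suc m}
      = insert (vderiv (Suc m) \<gamma> t0) {vderiv k \<gamma> t0 | k. 1 \<le> k \<and> k \<le> m}"
    by (auto simp: le_Suc_eq simp del: vderiv.simps)
  show ?thesis unfolding rankA_def derivs_Suc dim_insert by (auto simp del: vderiv.simps)
qed

lemma rankA_attains_2: "rankA \<gamma> m t0 \<ge> 2 \<Longrightarrow> \<exists>j\<le>m. rankA \<gamma> j t0 = 2"
proof (induction m)
  case 0
  then show ?case by (simp add: rankA_def)
next
  case (Suc m)
  show ?case
  proof (cases "rankA \<gamma> m t0 \<ge> 2")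
    case True
    then show ?thesis using Suc.IH le_SucI by blast
  next
    case False
    then have "rankA \<gamma> (Suc m) t0 = 2" using rankA_Suc_le[of \<gamma> m t0] Suc.prems by linarith
    then show ?thesis by blast
  qed
qed

lemma rankA_second_type_index:
  assumes "finite_type_at \<gamma> t0" and a2: "(LEAST m. rankA \<gamma> m t0 = 2) = a"
  shows "rankA \<gamma> a t0 = 2" and "m < a \<Longrightarrow> rankA \<gamma> m t0 \<le> 1"
proof -
  obtain m3 where "rankA \<gamma> m3 t0 = 3" using assms(1) unfolding finite_type_at_def by auto
  then obtain j where "rankA \<gamma> j t0 = 2" using rankA_attains_2[of \<gamma> m3 t0] by auto
  then show rank_a: "rankA \<gamma> a t0 = 2" using LeastI[of "\<lambda>m. rankA \<gamma> m t0 = 2"] a2 by simp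
  assume "m < a"
  then have "rankA \<gamma> m t0 \<noteq> 2" and "rankA \<gamma> m t0 \<le> 2"
    using not_less_Least[of m "\<lambda>m. rankA \<gamma> m t0 = 2"] rankA_mono[of m a \<gamma> t0] a2 rank_a
    by auto
  then show "rankA \<gamma> m t0 \<le> 1" by simp
qed

lemma subset_span_singleton_if_dim_le_1:
  fixes S :: "'a::euclidean_space set"
  assumes "dim S \<le> 1" "u \<in> S" "u \<noteq> 0"
  shows "S \<subseteq> span {u}"
proof
  fix x assume "x \<in> S"
  show "x \<in> span {u}"
  proof (rule ccontr)
    assume "x \<notin> span {u}"
    then have "dim (insert x {u}) = 2" using assms(3) by (simp add: dim_insert)
    moreover have "dim (insert x {u}) \<le> dim S" using \<open>x \<in> S\<close> assms(2) by (intro dim_subset) auto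
    ultimately show False using assms(1) by simp
  qed
qed

lemma vderiv_span_before_second_type_index:
  assumes "finite_type_at \<gamma> t0" "(LEAST m. rankA \<gamma> m t0 = 2) = Suc s" "s > 0"
    and "vderiv 1 \<gamma> t0 \<noteq> 0"
  shows "\<forall>k. 1 \<le> k \<and> k \<le> s \<longrightarrow> vderiv k \<gamma> t0 \<in> span {vderiv 1 \<gamma> t0}"
    and "vderiv (Suc s) \<gamma> t0 \<notin> span {vderiv 1 \<gamma> t0}"
proof -
  define A where "A m = {vderiv k \<gamma> t0 | k. 1 \<le> k \<and> k \<le> m}" for m
  have dim_A: "dim (A m) = rankA \<gamma> m t0" for m unfolding rankA_def A_def ..
  have "dim (A s) \<le> 1"
    using rankA_second_type_index(2)[OF assms(1,2), of s] by (simp add: dim_A)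
  moreover have "vderiv 1 \<gamma> t0 \<in> A s"
    using assms(3) unfolding A_def by (auto simp del: vderiv.simps)
  ultimately have "A s \<subseteq> span {vderiv 1 \<gamma> t0}"
    by (rule subset_span_singleton_if_dim_le_1[OF _ _ assms(4)])
  then show span_A: "\<forall>k. 1 \<le> k \<and> k \<le> s \<longrightarrow> vderiv k \<gamma> t0 \<in> span {vderiv 1 \<gamma> t0}"
    unfolding A_def by blast
  show "vderiv (Suc s) \<gamma> t0 \<notin> span {vderiv 1 \<gamma> t0}"
  proof
    assume "vderiv (Suc s) \<gamma> t0 \<in> span {vderiv 1 \<gamma> t0}"
    then have "A (Suc s) \<subseteq> span {vderiv 1 \<gamma> t0}"
      using span_A unfolding A_def by (auto simp: le_Suc_eq simp del: vderiv.simps)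
    then have "dim (A (Suc s)) \<le> dim (span {vderiv 1 \<gamma> t0})" by (rule dim_subset)
    then show False
      using rankA_second_type_index(1)[OF assms(1,2)] assms(4) by (simp add: dim_A dim_insert)
  qed
qed

lemma unit_speed_vderiv_eq_0:
  fixes \<gamma> :: "real \<Rightarrow> 'a::real_inner"
  assumes "open I" "t0 \<in> I" "smooth_on I \<gamma>" "\<forall>t\<in>I. norm (vderiv 1 \<gamma> t) = 1"
    and parallel: "\<forall>k. 1 \<le> k \<and> k \<le> s \<longrightarrow> vderiv k \<gamma> t0 \<in> span {vderiv 1 \<gamma> t0}"
  shows "2 \<le> k \<Longrightarrow> k \<le> s \<Longrightarrow> vderiv k \<gamma> t0 = 0"
proof (induction k rule: less_induct)
  case (less k)
  define m where "m = k - 1"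
  have m: "1 \<le> m" "k = Suc m" using less.prems unfolding m_def by auto
  let ?u = "vderiv 1 \<gamma> t0"
  let ?term = "\<lambda>i. real (m choose i) * (vderiv (Suc i) \<gamma> t0 \<bullet> vderiv (Suc (m - i)) \<gamma> t0)"
  have smooth': "smooth_on I (vderiv 1 \<gamma>)" by (rule smooth_on_vderiv[OF assms(3)])
  have "\<forall>t\<in>I. vderiv 1 \<gamma> t \<bullet> vderiv 1 \<gamma> t = 1"
    using assms(4) by (simp add: norm_eq_1)
  then have "0 = vderiv m (\<lambda>t. vderiv 1 \<gamma> t \<bullet> vderiv 1 \<gamma> t) t0"
    using vderiv_Suc_eq_0_if_constant_on[OF assms(1) _ assms(2), of _ 1 "m - 1"] m by simp
  also have "\<dots> = (\<Sum>i\<le>m. ?term i)"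
    using vderiv_inner_Leibniz[OF assms(1) smooth' smooth' assms(2)]
    by (simp add: vderiv_vderiv del: vderiv.simps)
  also have "\<dots> = (\<Sum>i\<in>{0, m}. ?term i)"
    \<comment> \<open>the inner terms contain a derivative of order between 2 and k - 1\<close>
    by (rule sum.mono_neutral_right) (use less.IH m less.prems in \<open>auto simp del: vderiv.simps\<close>)
  also have "\<dots> = 2 * (?u \<bullet> vderiv k \<gamma> t0)"
    using m by (simp add: inner_commute)
  finally have "?u \<bullet> vderiv k \<gamma> t0 = 0" by simp
  moreover have "vderiv k \<gamma> t0 \<in> span {?u}" using parallel less.prems by (simp del: vderiv.simps)
  then obtain c where c: "vderiv k \<gamma> t0 = c *\<^sub>R ?u" by (auto simp: span_singleton simp del: vderiv.simps)
  ultimately have "c * (?u \<bullet> ?u) = 0" by (simp del: vderiv.simps)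
  moreover have "?u \<noteq> 0" using assms(2,4) by (auto simp del: vderiv.simps)
  ultimately show ?case using c by (simp del: vderiv.simps)
qed

lemma vderiv_kappa2:
  assumes "open I" "t0 \<in> I" "smooth_on I \<gamma>" "smooth_on I n"
    and "\<forall>i<m. vderiv (i + 2) \<gamma> t0 = 0"
  shows "vderiv m (kappa2 \<gamma> n) t0 = vderiv (m + 2) \<gamma> t0 \<bullet> n t0"
proof -
  let ?term = "\<lambda>i. real (m choose i) * (vderiv (i + 2) \<gamma> t0 \<bullet> vderiv (m - i) n t0)"
  have "kappa2 \<gamma> n = (\<lambda>t. vderiv 2 \<gamma> t \<bullet> n t)"
    unfolding kappa2_def frame_e1_def frame_e3_def by (simp add: numeral_2_eq_2)
  then have "vderiv m (kappa2 \<gamma> n) t0 = (\<Sum>i\<le>m. ?term i)"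
    using vderiv_inner_Leibniz[OF assms(1) smooth_on_vderiv[OF assms(3)] assms(4,2)]
    by (simp add: vderiv_vderiv)
  also have "\<dots> = (\<Sum>i\<in>{m}. ?term i)"
    by (rule sum.mono_neutral_right) (use assms(5) in auto)
  finally show ?thesis by simp
qed

lemma affine_plane_eq_hyperplane_iff:
  fixes p u v N :: "'a::euclidean_space"
  assumes "DIM('a) = 3" "u \<noteq> 0" "v \<notin> span {u}" "u \<bullet> N = 0" "N \<noteq> 0"
  shows "{p + a *\<^sub>R u + b *\<^sub>R v | a b. True} = {p + w | w. w \<bullet> N = 0} \<longleftrightarrow> v \<bullet> N = 0"
proof
  assume "{p + a *\<^sub>R u + b *\<^sub>R v | a b. True} = {p + w | w. w \<bullet> N = 0}"
  moreover have "p + 0 *\<^sub>R u + 1 *\<^sub>R v \<in> {p + a *\<^sub>R u + b *\<^sub>R v | a b. True}" by blast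
  ultimately show "v \<bullet> N = 0" by auto
next
  assume vN: "v \<bullet> N = 0"
  have "span {u, v} = {x. N \<bullet> x = 0}"
  proof (rule subspace_dim_equal)
    show "span {u, v} \<subseteq> {x. N \<bullet> x = 0}"
      by (rule span_minimal) (use vN assms(4) subspace_hyperplane[of N] in \<open>auto simp: inner_commute\<close>)
    have "dim {u, v} = 2"
      using assms(2,3) by (simp add: dim_insert insert_commute[of u v])
    then show "dim {x. N \<bullet> x = 0} \<le> dim (span {u, v})"
      using dim_hyperplane[OF assms(5)] assms(1) by simp
  qed (simp_all add: subspace_hyperplane)
  then have "w \<bullet> N = 0 \<longleftrightarrow> w \<in> span {u, v}" for w
    by (auto simp: inner_commute)
  moreover have "w \<in> span {u, v} \<longleftrightarrow> (\<exists>a b. w = a *\<^sub>R u + b *\<^sub>R v)" for w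
    by (auto simp: span_insert span_singleton algebra_simps)
  ultimately have "w \<bullet> N = 0 \<longleftrightarrow> (\<exists>a b. w = a *\<^sub>R u + b *\<^sub>R v)" for w
    by blast
  then show "{p + a *\<^sub>R u + b *\<^sub>R v | a b. True} = {p + w | w. w \<bullet> N = 0}"
    by (auto simp: add.assoc)
qed

theorem theorem3p2:
  fixes \<gamma> n :: "real \<Rightarrow> real^3" and I :: "real set" and t0 :: real and r s :: nat
  assumes "open I" and "t0 \<in> I"
    and "smooth_on I \<gamma>" and "smooth_on I n"
    and "\<forall>t\<in>I. norm (vderiv 1 \<gamma> t) = 1"
    and "\<forall>t\<in>I. norm (n t) = 1"
    and "\<forall>t\<in>I. n t \<bullet> vderiv 1 \<gamma> t = 0"
    and "r > 0" and "s > 0"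
    and "finite_type_at \<gamma> t0"
    and "curve_type \<gamma> t0 = (1, 1 + s, 1 + s + r)"
  shows "osculating_tangent_point \<gamma> n t0 \<longleftrightarrow> vderiv (s - 1) (kappa2 \<gamma> n) t0 = 0"
proof -
  have unit_tangent: "vderiv 1 \<gamma> t0 \<noteq> 0" using assms(2,5) by auto
  have "(LEAST m. rankA \<gamma> m t0 = 2) = Suc s" using assms(11) unfolding curve_type_def by simp
  note span = vderiv_span_before_second_type_index[OF assms(10) this assms(9) unit_tangent]
  have "\<forall>i<s - 1. vderiv (i + 2) \<gamma> t0 = 0"
    by (intro allI impI unit_speed_vderiv_eq_0[OF assms(1,2,3,5) span(1)]) auto
  moreover have "s - 1 + 2 = Suc s" using assms(9) by simp
  ultimately have kappa2: "vderiv (s - 1) (kappa2 \<gamma> n) t0 = vderiv (Suc s) \<gamma> t0 \<bullet> n t0"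
    using vderiv_kappa2[OF assms(1,2,3,4), of "s - 1"] by (simp del: vderiv.simps)
  have osculating: "osculating_plane \<gamma> t0
      = {\<gamma> t0 + a *\<^sub>R vderiv 1 \<gamma> t0 + b *\<^sub>R vderiv (Suc s) \<gamma> t0 | a b. True}"
    unfolding osculating_plane_def assms(11) by (simp del: vderiv.simps)
  have normal: "vderiv 1 \<gamma> t0 \<bullet> n t0 = 0" "n t0 \<noteq> 0"
    using assms(2,6,7) by (auto simp: inner_commute simp del: vderiv.simps)
  show ?thesis
    unfolding osculating_tangent_point_def tangent_plane_at_def osculating kappa2
    using affine_plane_eq_hyperplane_iff[OF _ unit_tangent span(2) normal, of "\<gamma> t0"] by simp
qed

end
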